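(* Let $\Gamma$ be a compact subset of $\mathbb C\setminus\mathbf a(\mathbb S^1)$. There exist $C>0$ and $0<\kappa<1$ (depending on $\mathbf a$ and $\Gamma$) such that for all $z\in\Gamma$ and all $n>r+s$, $$\|Q_nR'_n(z)P_n-\mathcal H(z)\|\le C\kappa^n.$$
   Context: Fix integers $r\ge0,s\ge1$, complex $a_{-r},\dots,a_s$ with $a_s\ne0$, $\mathbf a(\lambda)=\sum_{k=-r}^sa_k\lambda^k$. For $n>r+s$, $C_n(\mathbf a)$ is the circulant matrix with $(i,j)$ entry $a_k$ if $j-i\equiv k\pmod n$ for some $k\in\{-r,\dots,s\}$, $0$ otherwise; $R'_n(z)=(z-C_n(\mathbf a))^{-1}$. $D_r\in M_r(\mathbb C)$ is upper triangular with $(D_r)_{pq}=a_{-r+q-p}$ ($q\ge p$); $E_s\in M_s(\mathbb C)$ is lower triangular with $(E_s)_{pq}=a_{s-p+q}$ ($p\ge q$). $P_n\in M_{n,r+s}(\mathbb C)$ has block rows (heights $r,n-r-s,s$) $(0_{r\times s}\ I_r)$, $0$, $(E_s\ 0_{s\times r})$; $Q_n\in M_{r+s,n}(\mathbb C)$ has block rows (heights $s,r$) $(I_s\ 0\ 0_{s\times r})$ and $(0_{r\times s}\ 0\ D_r)$. $\mathcal F(\omega)=(\omega^{p-q})_{1\le p,q\le r+s}$, $\mathcal D=\mathrm{diag}(I_s,D_r)$, $\mathcal E=\mathrm{diag}(E_s,I_r)$, and for $z\notin\mathbf a(\mathbb S^1)$, $$\mathcal H(z)=\frac1{2i\pi}\mathcal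 D\oint_{\mathbb S^1}\mathrm{diag}(\omega^sI_s,\omega^{-r}I_r)\frac{\mathcal F(\omega)}{\omega(z-\mathbf a(\omega))}d\omega\ \mathcal E$$ (contour integral over the positively oriented unit circle). $\|\cdot\|$ is the operator norm. *)

theory Defs
  imports "HOL-Complex_Analysis.Complex_Analysis" "Jordan_Normal_Form.Matrix"
begin

definition symb :: "nat \<Rightarrow> nat \<Rightarrow> (int \<Rightarrow> complex) \<Rightarrow> complex \<Rightarrow> complex" where
  "symb r s a x = (\<Sum>k\<in>{-int r..int s}. a k * x powi k)"

text \<open>Circulant matrix C_n(a) (indices 0-based; j - i mod n is shift invariant).\<close>
definition circ :: "nat \<Rightarrow> nat \<Rightarrow> (int \<Rightarrow> complex) \<Rightarrow> nat \<Rightarrow> complex mat" where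
  "circ r s a n = mat n n (\<lambda>(i,j).
     if \<exists>k\<in>{-int r..int s}. (int j - int i - k) mod int n = 0
     then a (THE k. k \<in> {-int r..int s} \<and> (int j - int i - k) mod int n = 0)
     else 0)"

definition resolv :: "nat \<Rightarrow> nat \<Rightarrow> (int \<Rightarrow> complex) \<Rightarrow> nat \<Rightarrow> complex \<Rightarrow> complex mat" where
  "resolv r s a n z = (THE B. B \<in> carrier_mat n n \<and>
      (z \<cdot>\<^sub>m 1\<^sub>m n - circ r s a n) * B = 1\<^sub>m n \<and> B * (z \<cdot>\<^sub>m 1\<^sub>m n - circ r s a n) = 1\<^sub>m n)"

definition Dmat :: "nat \<Rightarrow> (int \<Rightarrow> complex) \<Rightarrow> complex mat" where
  "Dmat r a = mat r r (\<lambda>(p,q). if q \<ge> p then a (- int r + int q - int p) else 0)"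

definition Emat :: "nat \<Rightarrow> (int \<Rightarrow> complex) \<Rightarrow> complex mat" where
  "Emat s a = mat s s (\<lambda>(p,q). if p \<ge> q then a (int s - int p + int q) else 0)"

text \<open>P_n : n x (r+s), block rows of heights r, n-r-s, s:
  (0_{r x s}  I_r), 0, (E_s  0_{s x r}).\<close>
definition Pmat :: "nat \<Rightarrow> nat \<Rightarrow> (int \<Rightarrow> complex) \<Rightarrow> nat \<Rightarrow> complex mat" where
  "Pmat r s a n = mat n (r + s) (\<lambda>(i,j).
     if i < r then (if j = s + i then 1 else 0)
     else if i \<ge> n - s then (if j < s then Emat s a $$ (i - (n - s), j) else 0)
     else 0)"

text \<open>Q_n : (r+s) x n, block rows of heights s, r:
  (I_s 0 0_{s x r}) and (0_{r x s} 0 D_r); column blocks of widths s, n-r-s, r.\<close>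
definition Qmat :: "nat \<Rightarrow> nat \<Rightarrow> (int \<Rightarrow> complex) \<Rightarrow> nat \<Rightarrow> complex mat" where
  "Qmat r s a n = mat (r + s) n (\<lambda>(i,j).
     if i < s then (if j = i then 1 else 0)
     else (if j \<ge> n - r then Dmat r a $$ (i - s, j - (n - r)) else 0))"

definition calD :: "nat \<Rightarrow> nat \<Rightarrow> (int \<Rightarrow> complex) \<Rightarrow> complex mat" where
  "calD r s a = four_block_mat (1\<^sub>m s) (0\<^sub>m s r) (0\<^sub>m r s) (Dmat r a)"

definition calE :: "nat \<Rightarrow> nat \<Rightarrow> (int \<Rightarrow> complex) \<Rightarrow> complex mat" where
  "calE r s a = four_block_mat (Emat s a) (0\<^sub>m s r) (0\<^sub>m r s) (1\<^sub>m r)"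

text \<open>H(z) = (1/(2 pi i)) calD (contour integral over the positively oriented unit circle of
  diag(w^s I_s, w^{-r} I_r) F(w) / (w (z - a(w))) dw) calE, with F(w) = (w^{p-q})_{p,q},
  the integral taken entrywise.\<close>
definition calH :: "nat \<Rightarrow> nat \<Rightarrow> (int \<Rightarrow> complex) \<Rightarrow> complex \<Rightarrow> complex mat" where
  "calH r s a z = calD r s a *
     mat (s + r) (s + r) (\<lambda>(p,q). (1 / (2 * pi * \<i>)) *
        contour_integral (circlepath 0 1)
          (\<lambda>w. (if p < s then w ^ s else w powi (- int r)) * w powi (int p - int q)
               / (w * (z - symb r s a w))))
     * calE r s a"

definition vnorm :: "complex vec \<Rightarrow> real" where
  "vnorm v = sqrt (\<Sum>i<dim_vec v. (cmod (v $ i))\<^sup>2)"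

definition opnorm :: "complex mat \<Rightarrow> real" where
  "opnorm M = Sup {vnorm (M *\<^sub>v v) | v. v \<in> carrier_vec (dim_col M) \<and> vnorm v \<le> 1}"

end

theory Submission
  imports Defs "Jordan_Normal_Form.Determinant"
begin

(* The discrete Fourier transform diagonalises the circulant matrix:
   R'_n(z)_ij = (1/n) sum_l omega_l^(i-j) / (z - a(omega_l)) with omega_l = exp(2 pi i l/n).
   Q_n and P_n factor through 0-1 selection matrices as calD S and T calE, so
   Q_n R'_n(z) P_n - H(z) = calD W calE, where each entry of W is the error
   (1/n) sum_l f(omega_l) - (1/(2 pi i)) oint f(u)/u du of the n-point trapezoidal rule
   for f(u) = u^d / (z - a(u)) with |d| <= 2(r+s).  Uniformly in z in Gamma, such f is
   holomorphic on an annulus containing rho <= |u| <= 1/rho.  By Cauchy's formula on the annulus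
   the trapezoidal sum is an integral over |u| = 1/rho minus one over |u| = rho against the kernel
   (1/n) sum_l 1/(u - omega_l) = u^(n-1)/(u^n - 1), which is 1/u + O(rho^(n+1)) on the outer
   circle and O(rho^(n-1)) on the inner one; hence the error is O(rho^n). *)

section \<open>Roots of unity\<close>

definition unit_root :: "nat \<Rightarrow> complex" where
  "unit_root n = exp (2 * of_real pi * \<i> / of_nat n)"

lemma unit_root_power_eq_1_iff:
  assumes "n \<ge> 1"
  shows "unit_root n ^ j = 1 \<longleftrightarrow> n dvd j"
proof -
  have "unit_root n ^ j = exp (2 * of_real pi * \<i> * of_nat j / of_nat n)"
    unfolding unit_root_def by (simp add: exp_of_nat_mult[symmetric] mult_ac)
  then show ?thesis
    using complex_root_unity_eq_1[of n j] assms by simp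
qed

lemma unit_root_power_order: "n \<ge> 1 \<Longrightarrow> (unit_root n ^ l) ^ n = 1"
  using unit_root_power_eq_1_iff[of n n]
  by (metis dvd_refl power_mult[symmetric] mult.commute power_mult power_one)

lemma norm_unit_root_power [simp]: "norm (unit_root n ^ l) = 1"
  unfolding unit_root_def by (simp add: norm_power norm_exp_eq_Re)

lemma nonzero_unit_root_power: "unit_root n ^ l \<noteq> 0"
  by (simp add: unit_root_def)

lemma power_int_mod:
  fixes w :: complex
  assumes "w ^ n = 1"
  shows "w powi (m mod int n) = w powi m"
proof (cases "n = 0")
  case False
  then have "w \<noteq> 0" using assms by (cases n) auto
  then have "w powi m = w powi (m mod int n) * (w powi int n) powi (m div int n)"
    by (metis power_int_add power_int_mult mult_div_mod_eq add.commute)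
  then show ?thesis using assms by simp
qed simp

lemma unit_root_power_int_eq_1_iff:
  assumes "n \<ge> 1"
  shows "unit_root n powi m = 1 \<longleftrightarrow> int n dvd m"
proof -
  have "unit_root n powi m = unit_root n ^ nat (m mod int n)"
    using power_int_mod[OF unit_root_power_order[OF assms, of 1], of m] assms
    by (simp add: power_int_def)
  moreover have "n dvd nat (m mod int n) \<longleftrightarrow> m mod int n = 0"
  proof -
    have "nat (m mod int n) < n" using assms by (simp add: nat_less_iff)
    then have "n dvd nat (m mod int n) \<longleftrightarrow> nat (m mod int n) = 0"
      using dvd_imp_le by fastforce
    moreover have "0 \<le> m mod int n" using assms by simp
    ultimately show ?thesis by auto
  qed
  ultimately show ?thesis
    using unit_root_power_eq_1_iff[OF assms] by (simp add: dvd_eq_mod_eq_0)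
qed

lemma sum_unit_root_power_int:
  assumes "n \<ge> 1"
  shows "(\<Sum>l<n. (unit_root n ^ l) powi m) = (if int n dvd m then of_nat n else 0)"
proof -
  let ?x = "unit_root n powi m"
  have "(\<Sum>l<n. (unit_root n ^ l) powi m) = (\<Sum>l<n. ?x ^ l)"
    by (simp add: power_int_power power_int_power' mult.commute)
  moreover have "?x ^ n = 1"
  proof -
    have "?x ^ n = (unit_root n ^ n) powi m"
      by (simp add: power_int_power power_int_power' mult.commute)
    then show ?thesis using unit_root_power_order[OF assms, of 1] by simp
  qed
  ultimately show ?thesis
    using unit_root_power_int_eq_1_iff[OF assms, of m]
    by (cases "int n dvd m") (simp_all add: geometric_sum)
qed

lemma sum_unit_root_power_diff:
  assumes "i < n" "j < n"
  shows "(1 / of_nat n) * (\<Sum>l<n. (unit_root n ^ l) powi (int i - int j)) = (if i = j then 1 else 0)"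
proof -
  have "int n dvd (int i - int j) \<longleftrightarrow> i = j"
  proof
    assume "int n dvd (int i - int j)"
    then show "i = j"
      using assms dvd_imp_le_int[of "int i - int j" "int n"] by (cases "i = j") auto
  qed simp
  then show ?thesis
    using assms sum_unit_root_power_int[of n "int i - int j"] by simp
qed

lemma sum_inverse_diff_unit_roots:
  assumes n: "n \<ge> 1" and u: "u ^ n \<noteq> 1"
  shows "(\<Sum>l<n. 1 / (u - unit_root n ^ l)) = of_nat n * u ^ (n - 1) / (u ^ n - 1)"
proof -
  have geom: "1 / (u - w) = (\<Sum>i<n. u ^ (n - Suc i) * w ^ i) / (u ^ n - 1)" if w: "w ^ n = 1" for w
  proof -
    have "u ^ n - 1 = (u - w) * (\<Sum>i<n. u ^ (n - Suc i) * w ^ i)"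
      using power_diff_sumr2[of w n u] w by (simp add: algebra_simps)
    moreover have "u - w \<noteq> 0" using u w by auto
    ultimately show ?thesis using u by (simp add: field_simps)
  qed
  have "(\<Sum>l<n. 1 / (u - unit_root n ^ l))
      = (\<Sum>l<n. \<Sum>i<n. u ^ (n - Suc i) * (unit_root n ^ l) ^ i) / (u ^ n - 1)"
    by (simp add: geom unit_root_power_order[OF n] sum_divide_distrib)
  also have "\<dots> = (\<Sum>i<n. u ^ (n - Suc i) * (\<Sum>l<n. (unit_root n ^ l) ^ i)) / (u ^ n - 1)"
    by (subst sum.swap) (simp add: sum_distrib_left)
  also have "\<dots> = (\<Sum>i<n. if i = 0 then u ^ (n - 1) * of_nat n else 0) / (u ^ n - 1)"
  proof -
    have "(\<Sum>l<n. (unit_root n ^ l) ^ i) = (if i = 0 then of_nat n else 0)" if "i < n" for i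
      using sum_unit_root_power_int[OF n, of "int i"] that by (auto dest: dvd_imp_le)
    then show ?thesis by (intro arg_cong2[where f = "(/)"] sum.cong) auto
  qed
  finally show ?thesis using n by (simp add: mult.commute)
qed

section \<open>The trapezoidal rule on an annulus\<close>

definition trapezoid_error :: "nat \<Rightarrow> (complex \<Rightarrow> complex) \<Rightarrow> complex" where
  "trapezoid_error n f = (1 / of_nat n) * (\<Sum>l<n. f (unit_root n ^ l))
     - (1 / (2 * of_real pi * \<i>)) * contour_integral (circlepath 0 1) (\<lambda>u. f u / u)"

definition annulus :: "real \<Rightarrow> real \<Rightarrow> complex set" where
  "annulus lo hi = ball 0 hi - cball 0 lo"

lemma mem_annulus [simp]: "w \<in> annulus lo hi \<longleftrightarrow> lo < norm w \<and> norm w < hi"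
  by (auto simp: annulus_def)

lemma open_annulus: "open (annulus lo hi)"
  unfolding annulus_def by (intro open_Diff) auto

lemma homotopic_loops_circlepath_annulus:
  assumes "0 \<le> lo" "lo < \<rho>1" "\<rho>1 < hi" "lo < \<rho>2" "\<rho>2 < hi"
  shows "homotopic_loops (annulus lo hi) (circlepath 0 \<rho>1) (circlepath 0 \<rho>2)"
proof (rule homotopic_loops_linear)
  fix t :: real
  let ?e = "exp (2 * of_real pi * \<i> * of_real t)"
  show "closed_segment (circlepath 0 \<rho>1 t) (circlepath 0 \<rho>2 t) \<subseteq> annulus lo hi"
  proof
    fix x assume "x \<in> closed_segment (circlepath 0 \<rho>1 t) (circlepath 0 \<rho>2 t)"
    then obtain u where u: "0 \<le> u" "u \<le> 1" and "x = (1 - u) *\<^sub>R (of_real \<rho>1 * ?e) + u *\<^sub>R (of_real \<rho>2 * ?e)"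
      unfolding closed_segment_def circlepath by auto
    then have "x = of_real ((1 - u) * \<rho>1 + u * \<rho>2) * ?e"
      by (simp add: scaleR_conv_of_real algebra_simps)
    moreover have "norm ?e = 1" by (simp add: norm_exp_eq_Re)
    ultimately have "norm x = \<bar>(1 - u) * \<rho>1 + u * \<rho>2\<bar>"
      by (simp only: norm_mult norm_of_real mult_1_right)
    moreover have "(1 - u) * \<rho>1 + u * \<rho>2 < hi"
      using u assms by (intro convex_bound_lt) auto
    moreover have "(1 - u) * (- \<rho>1) + u * (- \<rho>2) < - lo"
      using u assms by (intro convex_bound_lt) auto
    ultimately show "x \<in> annulus lo hi" using assms(1) by auto
  qed
qed auto

lemma contour_integral_circlepath_annulus_eq:
  assumes "f holomorphic_on annulus lo hi" "0 \<le> lo" "lo < \<rho>1" "\<rho>1 < hi" "lo < \<rho>2" "\<rho>2 < hi"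
  shows "contour_integral (circlepath 0 \<rho>1) f = contour_integral (circlepath 0 \<rho>2) f"
  by (rule Cauchy_theorem_homotopic_loops[OF homotopic_loops_circlepath_annulus[OF assms(2-)]
        open_annulus assms(1)]) auto

lemma contour_integrable_circlepath_annulus_divide:
  assumes "f holomorphic_on annulus lo hi" "0 \<le> lo" "lo < \<rho>" "\<rho> < hi"
    and "continuous_on (sphere 0 \<rho>) g" "\<And>u. norm u = \<rho> \<Longrightarrow> g u \<noteq> 0"
  shows "(\<lambda>u. f u / g u) contour_integrable_on circlepath 0 \<rho>"
proof (rule contour_integrable_continuous_circlepath)
  have "continuous_on (sphere 0 \<rho>) f"
    by (rule continuous_on_subset[OF holomorphic_on_imp_continuous_on[OF assms(1)]]) (use assms(3,4) in auto)
  then show "continuous_on (path_image (circlepath 0 \<rho>)) (\<lambda>u. f u / g u)"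
    using assms(2-) by (auto intro!: continuous_intros)
qed

lemma Cauchy_integral_formula_annulus:
  assumes hol: "f holomorphic_on annulus lo hi" and "0 \<le> lo" "lo < \<rho>2" "\<rho>2 < norm \<omega>" "norm \<omega> < \<rho>1" "\<rho>1 < hi"
  shows "2 * of_real pi * \<i> * f \<omega> = contour_integral (circlepath 0 \<rho>1) (\<lambda>u. f u / (u - \<omega>))
           - contour_integral (circlepath 0 \<rho>2) (\<lambda>u. f u / (u - \<omega>))"
proof -
  define F where "F = (\<lambda>u. if u = \<omega> then deriv f \<omega> else (f u - f \<omega>) / (u - \<omega>))"
  have "F holomorphic_on annulus lo hi"
    unfolding F_def by (rule pole_lemma_open[OF hol open_annulus])
  then have F_eq: "contour_integral (circlepath 0 \<rho>1) F = contour_integral (circlepath 0 \<rho>2) F"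
    by (rule contour_integral_circlepath_annulus_eq) (use assms in auto)
  have F_integral: "(F has_contour_integral (contour_integral (circlepath 0 \<rho>) (\<lambda>u. f u / (u - \<omega>)) - f \<omega> * c))
      (circlepath 0 \<rho>)"
    if "lo < \<rho>" "\<rho> < hi" "\<rho> \<noteq> norm \<omega>" "((\<lambda>u. 1 / (u - \<omega>)) has_contour_integral c) (circlepath 0 \<rho>)" for \<rho> c
  proof (rule has_contour_integral_eq)
    have "(\<lambda>u. f u / (u - \<omega>)) contour_integrable_on circlepath 0 \<rho>"
      using that assms(2) by (intro contour_integrable_circlepath_annulus_divide[OF hol]) (auto intro!: continuous_intros)
    then show "((\<lambda>u. f u / (u - \<omega>) - f \<omega> * (1 / (u - \<omega>))) has_contour_integral
        (contour_integral (circlepath 0 \<rho>) (\<lambda>u. f u / (u - \<omega>)) - f \<omega> * c)) (circlepath 0 \<rho>)"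
      using that(4) by (intro has_contour_integral_diff has_contour_integral_lmul has_contour_integral_integral)
    fix u assume "u \<in> path_image (circlepath 0 \<rho>)"
    then have "u \<noteq> \<omega>" using that assms(2) by auto
    then show "f u / (u - \<omega>) - f \<omega> * (1 / (u - \<omega>)) = F u"
      by (simp add: F_def diff_divide_distrib)
  qed
  have "((\<lambda>u. 1 / (u - \<omega>)) has_contour_integral (2 * of_real pi * \<i>)) (circlepath 0 \<rho>1)"
    using Cauchy_integral_circlepath[of 0 \<rho>1 "\<lambda>_. 1" \<omega>] assms by simp
  from contour_integral_unique[OF F_integral[OF _ _ _ this]]
  have "contour_integral (circlepath 0 \<rho>1) F
      = contour_integral (circlepath 0 \<rho>1) (\<lambda>u. f u / (u - \<omega>)) - f \<omega> * (2 * of_real pi * \<i>)"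
    using assms by auto
  moreover have "((\<lambda>u. 1 / (u - \<omega>)) has_contour_integral 0) (circlepath 0 \<rho>2)"
    using assms by (intro Cauchy_theorem_disc_simple[of _ 0 "norm \<omega>"] holomorphic_intros) auto
  from contour_integral_unique[OF F_integral[OF _ _ _ this]]
  have "contour_integral (circlepath 0 \<rho>2) F = contour_integral (circlepath 0 \<rho>2) (\<lambda>u. f u / (u - \<omega>))"
    using assms by auto
  ultimately show ?thesis using F_eq by (simp add: algebra_simps)
qed

lemma power_ne_1_off_unit_circle:
  fixes u :: complex
  assumes "n \<ge> 1" "norm u \<noteq> 1"
  shows "u ^ n \<noteq> 1"
proof
  assume "u ^ n = 1"
  then have "norm u ^ n = 1 ^ n" by (metis norm_one norm_power power_one)
  then show False using assms power_eq_iff_eq_base[of n "norm u" 1] by simp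
qed

lemma trapezoid_sum_eq_contour_integrals:
  assumes hol: "f holomorphic_on annulus lo hi" and "0 \<le> lo" "lo < \<rho>" "\<rho> < 1" "1 < R" "R < hi"
    and n: "n \<ge> 1"
  shows "2 * of_real pi * \<i> * ((1 / of_nat n) * (\<Sum>l<n. f (unit_root n ^ l)))
     = contour_integral (circlepath 0 R) (\<lambda>u. f u * u ^ (n - 1) / (u ^ n - 1))
       - contour_integral (circlepath 0 \<rho>) (\<lambda>u. f u * u ^ (n - 1) / (u ^ n - 1))"
proof -
  define J where "J t l = contour_integral (circlepath 0 t) (\<lambda>u. f u / (u - unit_root n ^ l))" for t l
  have kernel_integral: "((\<lambda>u. f u * u ^ (n - 1) / (u ^ n - 1)) has_contour_integral
      ((1 / of_nat n) * (\<Sum>l<n. J t l))) (circlepath 0 t)" if t: "lo < t" "t < hi" "t \<noteq> 1" for t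
  proof (rule has_contour_integral_eq)
    have "((\<lambda>u. \<Sum>l<n. (1 / of_nat n) * (f u / (u - unit_root n ^ l))) has_contour_integral
        (\<Sum>l<n. (1 / of_nat n) * J t l)) (circlepath 0 t)"
      unfolding J_def using t assms(2)
      by (intro has_contour_integral_sum has_contour_integral_lmul has_contour_integral_integral
          contour_integrable_circlepath_annulus_divide[OF hol]) (auto intro!: continuous_intros)
    then show "((\<lambda>u. \<Sum>l<n. (1 / of_nat n) * (f u / (u - unit_root n ^ l))) has_contour_integral
        ((1 / of_nat n) * (\<Sum>l<n. J t l))) (circlepath 0 t)"
      by (simp add: sum_distrib_left)
    fix u assume "u \<in> path_image (circlepath 0 t)"
    then have "norm u \<noteq> 1" using t assms(2) by auto
    then show "(\<Sum>l<n. (1 / of_nat n) * (f u / (u - unit_root n ^ l))) = f u * u ^ (n - 1) / (u ^ n - 1)"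
      using sum_inverse_diff_unit_roots[OF n power_ne_1_off_unit_circle[OF n]] n
      by (simp add: sum_distrib_left[symmetric] divide_inverse mult_ac)
  qed
  have "2 * of_real pi * \<i> * f (unit_root n ^ l) = J R l - J \<rho> l" for l
    unfolding J_def using assms by (intro Cauchy_integral_formula_annulus[OF hol]) auto
  then have "2 * of_real pi * \<i> * ((1 / of_nat n) * (\<Sum>l<n. f (unit_root n ^ l)))
      = (1 / of_nat n) * (\<Sum>l<n. J R l) - (1 / of_nat n) * (\<Sum>l<n. J \<rho> l)"
    by (simp add: sum_distrib_left sum_subtractf[symmetric] right_diff_distrib diff_divide_distrib mult_ac)
  then show ?thesis
    using contour_integral_unique[OF kernel_integral] assms by simp
qed

lemma trapezoid_error_eq_contour_integrals:
  assumes hol: "f holomorphic_on annulus lo hi" and "0 \<le> lo" "lo < \<rho>" "\<rho> < 1" "1 < R" "R < hi"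
    and n: "n \<ge> 1"
  shows "2 * of_real pi * \<i> * trapezoid_error n f
     = contour_integral (circlepath 0 R) (\<lambda>u. f u / (u * (u ^ n - 1)))
       - contour_integral (circlepath 0 \<rho>) (\<lambda>u. f u * u ^ (n - 1) / (u ^ n - 1))"
proof -
  have "(\<lambda>u. f u * u ^ (n - 1)) holomorphic_on annulus lo hi" "(\<lambda>u. f u / u) holomorphic_on annulus lo hi"
    using hol assms(2) by (auto intro!: holomorphic_intros)
  then have integrable: "(\<lambda>u. f u * u ^ (n - 1) / (u ^ n - 1)) contour_integrable_on circlepath 0 R"
      "(\<lambda>u. f u / u) contour_integrable_on circlepath 0 R"
    and "contour_integral (circlepath 0 1) (\<lambda>u. f u / u) = contour_integral (circlepath 0 R) (\<lambda>u. f u / u)"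
    using assms power_ne_1_off_unit_circle[OF n]
    by (auto intro!: contour_integrable_circlepath_annulus_divide contour_integral_circlepath_annulus_eq
        continuous_intros)
  moreover have "contour_integral (circlepath 0 R) (\<lambda>u. f u * u ^ (n - 1) / (u ^ n - 1))
      - contour_integral (circlepath 0 R) (\<lambda>u. f u / u)
      = contour_integral (circlepath 0 R) (\<lambda>u. f u / (u * (u ^ n - 1)))"
  proof -
    have pointwise: "f u * u ^ (n - 1) / (u ^ n - 1) - f u / u = f u / (u * (u ^ n - 1))" if "norm u = R" for u
    proof -
      have "u \<noteq> 0" "u ^ n \<noteq> 1" using that assms power_ne_1_off_unit_circle[OF n] by auto
      moreover have "u * u ^ (n - 1) = u ^ n" using n by (simp add: power_eq_if)
      ultimately show ?thesis by (simp add: field_simps)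
    qed
    have "contour_integral (circlepath 0 R) (\<lambda>u. f u * u ^ (n - 1) / (u ^ n - 1))
        - contour_integral (circlepath 0 R) (\<lambda>u. f u / u)
        = contour_integral (circlepath 0 R) (\<lambda>u. f u * u ^ (n - 1) / (u ^ n - 1) - f u / u)"
      by (rule contour_integral_diff[OF integrable, symmetric])
    also have "\<dots> = contour_integral (circlepath 0 R) (\<lambda>u. f u / (u * (u ^ n - 1)))"
      by (rule contour_integral_eq, rule pointwise) (use assms in auto)
    finally show ?thesis .
  qed
  ultimately show ?thesis
    unfolding trapezoid_error_def right_diff_distrib
    using trapezoid_sum_eq_contour_integrals[OF assms] by simp
qed

lemma norm_outer_kernel_integral_le:
  assumes n: "n \<ge> 1" and \<rho>: "0 < \<rho>" "\<rho> < 1" and "0 \<le> M"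
    and integrable: "(\<lambda>u. f u / (u * (u ^ n - 1))) contour_integrable_on circlepath 0 (1 / \<rho>)"
    and bound: "\<And>u. norm u = 1 / \<rho> \<Longrightarrow> norm (f u) \<le> M"
  shows "norm (contour_integral (circlepath 0 (1 / \<rho>)) (\<lambda>u. f u / (u * (u ^ n - 1))))
    \<le> 2 * pi * (M * \<rho> ^ n / (1 - \<rho> ^ n))"
proof -
  have \<rho>n: "0 < \<rho> ^ n" "\<rho> ^ n < 1" using \<rho> n by (auto simp: power_less_one_iff)
  have "norm (contour_integral (circlepath 0 (1 / \<rho>)) (\<lambda>u. f u / (u * (u ^ n - 1))))
      \<le> M * (\<rho> ^ (n + 1) / (1 - \<rho> ^ n)) * (2 * pi * (1 / \<rho>))"
  proof (rule has_contour_integral_bound_circlepath[OF has_contour_integral_integral[OF integrable]])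
    fix u :: complex assume "norm (u - 0) = 1 / \<rho>"
    then have u: "norm u = 1 / \<rho>" by simp
    have "(1 - \<rho> ^ n) / \<rho> ^ (n + 1) = (1 / \<rho>) * ((1 - \<rho> ^ n) / \<rho> ^ n)"
      using \<rho> by (simp add: field_simps)
    also have "\<dots> \<le> norm (u * (u ^ n - 1))"
    proof -
      have "(1 - \<rho> ^ n) / \<rho> ^ n \<le> norm (u ^ n - 1)"
        using norm_triangle_ineq2[of "u ^ n" 1] u \<rho> by (simp add: norm_power power_one_over diff_divide_distrib)
      then show ?thesis unfolding norm_mult u by (rule mult_left_mono) (use \<rho> in auto)
    qed
    finally have "norm (f u / (u * (u ^ n - 1))) \<le> M / ((1 - \<rho> ^ n) / \<rho> ^ (n + 1))"
      using bound[OF u] \<rho> \<rho>n \<open>0 \<le> M\<close> unfolding norm_divide by (intro frac_le) auto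
    then show "norm (f u / (u * (u ^ n - 1))) \<le> M * (\<rho> ^ (n + 1) / (1 - \<rho> ^ n))"
      by simp
  qed (use \<rho> \<rho>n \<open>0 \<le> M\<close> in auto)
  also have "\<dots> = 2 * pi * (M * \<rho> ^ n / (1 - \<rho> ^ n))"
    using \<rho> \<rho>n by (simp add: field_simps)
  finally show ?thesis .
qed

lemma norm_inner_kernel_integral_le:
  assumes n: "n \<ge> 1" and \<rho>: "0 < \<rho>" "\<rho> < 1" and "0 \<le> M"
    and integrable: "(\<lambda>u. f u * u ^ (n - 1) / (u ^ n - 1)) contour_integrable_on circlepath 0 \<rho>"
    and bound: "\<And>u. norm u = \<rho> \<Longrightarrow> norm (f u) \<le> M"
  shows "norm (contour_integral (circlepath 0 \<rho>) (\<lambda>u. f u * u ^ (n - 1) / (u ^ n - 1)))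
    \<le> 2 * pi * (M * \<rho> ^ n / (1 - \<rho> ^ n))"
proof -
  have \<rho>n: "0 < \<rho> ^ n" "\<rho> ^ n < 1" using \<rho> n by (auto simp: power_less_one_iff)
  have "norm (contour_integral (circlepath 0 \<rho>) (\<lambda>u. f u * u ^ (n - 1) / (u ^ n - 1)))
      \<le> M * (\<rho> ^ (n - 1) / (1 - \<rho> ^ n)) * (2 * pi * \<rho>)"
  proof (rule has_contour_integral_bound_circlepath[OF has_contour_integral_integral[OF integrable]])
    fix u :: complex assume "norm (u - 0) = \<rho>"
    then have u: "norm u = \<rho>" by simp
    have "1 - \<rho> ^ n \<le> norm (u ^ n - 1)"
      using norm_triangle_ineq3[of 1 "u ^ n"] u by (simp add: norm_power norm_minus_commute)
    then have "norm (f u * u ^ (n - 1) / (u ^ n - 1)) \<le> M * \<rho> ^ (n - 1) / (1 - \<rho> ^ n)"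
      using bound[OF u] u \<rho> \<rho>n \<open>0 \<le> M\<close> unfolding norm_divide norm_mult norm_power
      by (intro frac_le mult_right_mono) auto
    then show "norm (f u * u ^ (n - 1) / (u ^ n - 1)) \<le> M * (\<rho> ^ (n - 1) / (1 - \<rho> ^ n))"
      by simp
  qed (use \<rho> \<rho>n \<open>0 \<le> M\<close> in auto)
  also have "\<dots> = 2 * pi * (M * \<rho> ^ n / (1 - \<rho> ^ n))"
  proof -
    have "\<rho> * \<rho> ^ (n - 1) = \<rho> ^ n" using n by (simp add: power_eq_if)
    then show ?thesis by (simp add: field_simps)
  qed
  finally show ?thesis .
qed

lemma norm_trapezoid_error_le:
  assumes hol: "f holomorphic_on annulus lo hi" and "0 \<le> lo" "lo < \<rho>" "\<rho> < 1" "1 / \<rho> < hi"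
    and n: "n \<ge> 1" and bound: "\<And>u. norm u = \<rho> \<or> norm u = 1 / \<rho> \<Longrightarrow> norm (f u) \<le> M"
  shows "norm (trapezoid_error n f) \<le> 2 * M * \<rho> ^ n / (1 - \<rho> ^ n)"
proof -
  have \<rho>: "0 < \<rho>" "\<rho> < 1" using assms by auto
  then have "1 < 1 / \<rho>" by simp
  then have "lo < 1 / \<rho>" "\<rho> < hi" using \<rho> assms by linarith+
  have "0 \<le> M" using bound[of "of_real \<rho>"] \<rho> by (metis norm_ge_zero norm_of_real abs_of_pos order_trans)
  have hol': "(\<lambda>u. f u * u ^ (n - 1)) holomorphic_on annulus lo hi" using hol by (intro holomorphic_intros)
  have "(\<lambda>u. f u * u ^ (n - 1) / (u ^ n - 1)) contour_integrable_on circlepath 0 \<rho>"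
    using assms \<open>\<rho> < hi\<close> power_ne_1_off_unit_circle[OF n]
    by (intro contour_integrable_circlepath_annulus_divide[OF hol']) (auto intro!: continuous_intros)
  then have inner: "norm (contour_integral (circlepath 0 \<rho>) (\<lambda>u. f u * u ^ (n - 1) / (u ^ n - 1)))
      \<le> 2 * pi * (M * \<rho> ^ n / (1 - \<rho> ^ n))"
    using bound by (intro norm_inner_kernel_integral_le[OF n \<rho> \<open>0 \<le> M\<close>]) auto
  have "(\<lambda>u. f u / (u * (u ^ n - 1))) contour_integrable_on circlepath 0 (1 / \<rho>)"
    using assms \<open>1 < 1 / \<rho>\<close> \<open>lo < 1 / \<rho>\<close> power_ne_1_off_unit_circle[OF n]
    by (intro contour_integrable_circlepath_annulus_divide[OF hol]) (auto intro!: continuous_intros)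
  then have outer: "norm (contour_integral (circlepath 0 (1 / \<rho>)) (\<lambda>u. f u / (u * (u ^ n - 1))))
      \<le> 2 * pi * (M * \<rho> ^ n / (1 - \<rho> ^ n))"
    using bound by (intro norm_outer_kernel_integral_le[OF n \<rho> \<open>0 \<le> M\<close>]) auto
  have "2 * pi * norm (trapezoid_error n f) = norm (2 * of_real pi * \<i> * trapezoid_error n f)"
    by (simp add: norm_mult)
  also have "\<dots> \<le> 2 * pi * (M * \<rho> ^ n / (1 - \<rho> ^ n)) + 2 * pi * (M * \<rho> ^ n / (1 - \<rho> ^ n))"
    unfolding trapezoid_error_eq_contour_integrals[OF hol assms(2-4) \<open>1 < 1 / \<rho>\<close> assms(5) n]
    using norm_triangle_ineq4 outer inner by (rule order_trans[OF _ add_mono])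
  also have "\<dots> = 2 * pi * (2 * M * \<rho> ^ n / (1 - \<rho> ^ n))"
    by (simp add: algebra_simps)
  finally show ?thesis by (rule mult_left_le_imp_le) (use pi_gt_zero in simp)
qed

section \<open>The resolvent of a circulant matrix\<close>

lemma sum_if_unique:
  assumes "finite A" "x0 \<in> A" "P x0" "\<And>x. x \<in> A \<Longrightarrow> P x \<Longrightarrow> x = x0"
  shows "(\<Sum>x\<in>A. if P x then g x else 0) = g x0"
proof -
  have "P x \<longleftrightarrow> x = x0" if "x \<in> A" for x
    using assms(3,4) that by blast
  then have "(\<Sum>x\<in>A. if P x then g x else 0) = (\<Sum>x\<in>A. if x = x0 then g x else 0)"
    by (intro sum.cong) auto
  then show ?thesis using assms(1,2) by simp
qed

lemma if_unique_eq_sum: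
  assumes "finite K" and uniq: "\<And>k k'. k \<in> K \<Longrightarrow> k' \<in> K \<Longrightarrow> P k \<Longrightarrow> P k' \<Longrightarrow> k = k'"
  shows "(if \<exists>k\<in>K. P k then f (THE k. k \<in> K \<and> P k) else 0) = (\<Sum>k\<in>K. if P k then f k else 0)"
proof (cases "\<exists>k\<in>K. P k")
  case True
  then obtain k0 where k0: "k0 \<in> K" "P k0" by blast
  then have "(THE k. k \<in> K \<and> P k) = k0"
    using uniq by (intro the_equality) auto
  moreover have "(\<Sum>k\<in>K. if P k then f k else 0) = f k0"
    using assms(1) k0 uniq by (intro sum_if_unique) blast+
  ultimately show ?thesis using True by simp
qed simp

lemma circ_index_sum:
  assumes "n > r + s" "i < n" "j < n"
  shows "circ r s a n $$ (i,j) = (\<Sum>k\<in>{-int r..int s}. if int n dvd (int j - int i - k) then a k else 0)"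
proof -
  have "k = k'" if "k \<in> {-int r..int s}" "k' \<in> {-int r..int s}"
    "int n dvd (int j - int i - k)" "int n dvd (int j - int i - k')" for k k'
  proof -
    have "int n dvd (k' - k)" using dvd_diff[OF that(3,4)] by simp
    moreover have "\<bar>k' - k\<bar> < int n" using that(1,2) assms(1) by auto
    ultimately show ?thesis using dvd_imp_le_int[of "k' - k" "int n"] by (cases "k = k'") auto
  qed
  moreover have "circ r s a n $$ (i,j) = (if \<exists>k\<in>{-int r..int s}. int n dvd (int j - int i - k)
      then a (THE k. k \<in> {-int r..int s} \<and> int n dvd (int j - int i - k)) else 0)"
    using assms(2,3) unfolding circ_def dvd_eq_mod_eq_0 by (subst index_mat) auto
  ultimately show ?thesis
    using if_unique_eq_sum[of "{-int r..int s}" "\<lambda>k. int n dvd (int j - int i - k)" a] by simp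
qed

lemma sum_if_dvd_diff:
  assumes "n \<ge> 1"
  shows "(\<Sum>m<n. if int n dvd (int m - x) then f m else 0) = f (nat (x mod int n))"
proof -
  have "int n dvd (int m - x) \<longleftrightarrow> m = nat (x mod int n)" if "m < n" for m
    using that assms by (auto simp: mod_eq_dvd_iff[symmetric])
  then have "(\<Sum>m<n. if int n dvd (int m - x) then f m else 0)
      = (\<Sum>m<n. if m = nat (x mod int n) then f m else 0)"
    by (intro sum.cong) auto
  then show ?thesis using assms by (simp add: nat_less_iff)
qed

lemma circ_mult_root_vector:
  assumes "n > r + s" "i < n" "w ^ n = 1"
  shows "(\<Sum>m<n. circ r s a n $$ (i,m) * w powi int m) = symb r s a w * w powi int i"
proof -
  let ?K = "{-int r..int s}"
  have n1: "n \<ge> 1" using assms by simp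
  have w0: "w \<noteq> 0" using assms n1 by (metis power_0_left not_one_le_zero zero_neq_one)
  have "(\<Sum>m<n. circ r s a n $$ (i,m) * w powi int m)
      = (\<Sum>m<n. \<Sum>k\<in>?K. if int n dvd (int m - (int i + k)) then a k * w powi int m else 0)"
    using assms(1,2) by (intro sum.cong) (auto simp: circ_index_sum sum_distrib_right diff_diff_eq intro!: sum.cong)
  also have "\<dots> = (\<Sum>k\<in>?K. \<Sum>m<n. if int n dvd (int m - (int i + k)) then a k * w powi int m else 0)"
    by (rule sum.swap)
  also have "\<dots> = (\<Sum>k\<in>?K. a k * w powi (int i + k))"
    using n1 power_int_mod[OF assms(3)] by (simp add: sum_if_dvd_diff)
  also have "\<dots> = symb r s a w * w powi int i"
    unfolding symb_def sum_distrib_right by (simp add: power_int_add w0 mult_ac)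
  finally show ?thesis .
qed

definition resolv_dft :: "nat \<Rightarrow> nat \<Rightarrow> (int \<Rightarrow> complex) \<Rightarrow> nat \<Rightarrow> complex \<Rightarrow> complex mat" where
  "resolv_dft r s a n z = mat n n (\<lambda>(i,j). (1 / of_nat n) *
     (\<Sum>l<n. (unit_root n ^ l) powi (int i - int j) / (z - symb r s a (unit_root n ^ l))))"

lemma dim_circ [simp]: "dim_row (circ r s a n) = n" "dim_col (circ r s a n) = n"
  by (simp_all add: circ_def)

lemma dim_resolv_dft [simp]: "dim_row (resolv_dft r s a n z) = n" "dim_col (resolv_dft r s a n z) = n"
  by (simp_all add: resolv_dft_def)

lemma circ_sub_mult_resolv_dft:
  assumes n: "n > r + s" and z: "z \<notin> symb r s a ` sphere 0 1"
  shows "(z \<cdot>\<^sub>m 1\<^sub>m n - circ r s a n) * resolv_dft r s a n z = 1\<^sub>m n"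
proof (rule eq_matI)
  let ?A = "z \<cdot>\<^sub>m 1\<^sub>m n - circ r s a n"
  let ?X = "\<lambda>l. unit_root n ^ l" and ?d = "\<lambda>l. z - symb r s a (unit_root n ^ l)"
  fix i j assume "i < dim_row (1\<^sub>m n :: complex mat)" "j < dim_col (1\<^sub>m n :: complex mat)"
  then have i: "i < n" and j: "j < n" by auto
  have n1: "n \<ge> 1" using n by simp
  have d0: "?d l \<noteq> 0" for l
    using z norm_unit_root_power[of n l] by (metis eq_iff_diff_eq_0 image_eqI mem_sphere_0)
  have "(\<Sum>m<n. ?A $$ (i,m) * w powi int m)
      = (\<Sum>m<n. (if i = m then z * w powi int m else 0) - circ r s a n $$ (i,m) * w powi int m)"
    for w :: complex
    using i by (intro sum.cong) (auto simp: left_diff_distrib)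
  then have "(\<Sum>m<n. ?A $$ (i,m) * w powi int m)
      = z * w powi int i - (\<Sum>m<n. circ r s a n $$ (i,m) * w powi int m)" for w :: complex
    using i by (simp add: sum_subtractf)
  then have row: "(\<Sum>m<n. ?A $$ (i,m) * ?X l ^ m) = ?d l * ?X l ^ i" for l
    using circ_mult_root_vector[OF n i unit_root_power_order[OF n1]] by (simp add: left_diff_distrib)
  have B: "resolv_dft r s a n z $$ (m,j) = (1 / of_nat n) * (\<Sum>l<n. ?X l ^ m * (?X l powi (- int j) / ?d l))"
    if "m < n" for m
    using that j nonzero_unit_root_power
    by (simp add: resolv_dft_def power_int_diff power_int_minus divide_inverse mult.assoc)
  have "(?A * resolv_dft r s a n z) $$ (i,j) = (\<Sum>m<n. ?A $$ (i,m) * resolv_dft r s a n z $$ (m,j))"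
    using i j by (simp add: scalar_prod_def lessThan_atLeast0)
  also have "\<dots> = (1 / of_nat n) * (\<Sum>l<n. (\<Sum>m<n. ?A $$ (i,m) * ?X l ^ m) * (?X l powi (- int j) / ?d l))"
    by (simp add: B sum_distrib_left sum_distrib_right mult_ac) (rule sum.swap)
  also have "\<dots> = (1 / of_nat n) * (\<Sum>l<n. ?X l powi (int i - int j))"
  proof -
    have "?d l * ?X l ^ i * (?X l powi (- int j) / ?d l) = ?X l powi (int i - int j)" for l
      using d0[of l] nonzero_unit_root_power[of n l] by (simp add: power_int_diff power_int_minus field_simps)
    then show ?thesis by (simp add: row)
  qed
  also have "\<dots> = 1\<^sub>m n $$ (i,j)"
    using sum_unit_root_power_diff[OF i j] i j by simp
  finally show "(?A * resolv_dft r s a n z) $$ (i,j) = 1\<^sub>m n $$ (i,j)" .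
qed auto

lemma resolv_eq_resolv_dft:
  assumes n: "n > r + s" and z: "z \<notin> symb r s a ` sphere 0 1"
  shows "resolv r s a n z = resolv_dft r s a n z"
  unfolding resolv_def
proof (rule the_equality)
  let ?A = "z \<cdot>\<^sub>m 1\<^sub>m n - circ r s a n" and ?B = "resolv_dft r s a n z"
  have A: "?A \<in> carrier_mat n n" by (simp add: carrier_matI)
  have B: "?B \<in> carrier_mat n n" by (simp add: carrier_matI)
  have AB: "?A * ?B = 1\<^sub>m n" by (rule circ_sub_mult_resolv_dft[OF assms])
  then show "?B \<in> carrier_mat n n \<and> ?A * ?B = 1\<^sub>m n \<and> ?B * ?A = 1\<^sub>m n"
    using mat_mult_left_right_inverse[OF A B] B by simp
  fix B' assume B': "B' \<in> carrier_mat n n \<and> ?A * B' = 1\<^sub>m n \<and> B' * ?A = 1\<^sub>m n"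
  then have B'c: "B' \<in> carrier_mat n n" by blast
  have "B' = B' * (?A * ?B)" using AB right_mult_one_mat[OF B'c] by simp
  also have "\<dots> = (B' * ?A) * ?B" using assoc_mult_mat[OF B'c A B] by simp
  also have "\<dots> = ?B" using B' left_mult_one_mat[OF B] by simp
  finally show "B' = ?B" .
qed

section \<open>Reduction to trapezoidal errors\<close>

definition sel_mat :: "nat \<Rightarrow> nat \<Rightarrow> (nat \<Rightarrow> nat) \<Rightarrow> 'a :: semiring_1 mat" where
  "sel_mat m n f = mat m n (\<lambda>(x,i). if i = f x then 1 else 0)"

lemma if_one_zero_mult:
  fixes y :: "'a :: semiring_1"
  shows "(if P then 1 else 0) * y = (if P then y else 0)" "y * (if P then 1 else 0) = (if P then y else 0)"
  by simp_all

lemma dim_sel_mat [simp]: "dim_row (sel_mat m n f) = m" "dim_col (sel_mat m n f) = n"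
  by (simp_all add: sel_mat_def)

lemma index_sel_mat_mult:
  assumes "x < m" "f x < n" "j < dim_col X" "dim_row X = n"
  shows "(sel_mat m n f * X) $$ (x,j) = X $$ (f x, j)"
proof -
  have "(sel_mat m n f * X) $$ (x,j) = (\<Sum>i<n. if i = f x then X $$ (i,j) else 0)"
    using assms by (simp add: sel_mat_def scalar_prod_def lessThan_atLeast0 if_one_zero_mult)
  then show ?thesis using assms by simp
qed

lemma index_mult_transpose_sel_mat:
  assumes "x < m" "f x < n" "j < dim_row X" "dim_col X = n"
  shows "(X * transpose_mat (sel_mat m n f)) $$ (j,x) = X $$ (j, f x)"
proof -
  have "(X * transpose_mat (sel_mat m n f)) $$ (j,x) = (\<Sum>i<n. if i = f x then X $$ (j,i) else 0)"
    using assms by (simp add: sel_mat_def scalar_prod_def lessThan_atLeast0 if_one_zero_mult)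
  then show ?thesis using assms by simp
qed

lemma index_mult_sel_mat:
  assumes "p < dim_row A" "i < n" "dim_col A = m"
  shows "(A * sel_mat m n f) $$ (p,i) = (\<Sum>x<m. if i = f x then A $$ (p,x) else 0)"
  using assms by (simp add: sel_mat_def scalar_prod_def lessThan_atLeast0 if_one_zero_mult)

lemma index_transpose_sel_mat_mult:
  assumes "i < n" "q < dim_col A" "dim_row A = m"
  shows "(transpose_mat (sel_mat m n f) * A) $$ (i,q) = (\<Sum>x<m. if i = f x then A $$ (x,q) else 0)"
  using assms by (simp add: sel_mat_def scalar_prod_def lessThan_atLeast0 if_one_zero_mult)

text \<open>Q_n involves only the first s and the last r of the n indices, P_n only the last s and the
  first r; Q_index and P_index enumerate them in the order of the blocks of calD and calE.\<close>

definition Q_index :: "nat \<Rightarrow> nat \<Rightarrow> nat \<Rightarrow> nat \<Rightarrow> nat" where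
  "Q_index r s n x = (if x < s then x else n - r + (x - s))"

definition P_index :: "nat \<Rightarrow> nat \<Rightarrow> nat \<Rightarrow> nat \<Rightarrow> nat" where
  "P_index r s n x = (if x < s then n - s + x else x - s)"

lemma dim_Dmat [simp]: "dim_row (Dmat r a) = r" "dim_col (Dmat r a) = r"
  by (simp_all add: Dmat_def)

lemma dim_Emat [simp]: "dim_row (Emat s a) = s" "dim_col (Emat s a) = s"
  by (simp_all add: Emat_def)

lemma dim_calD [simp]: "dim_row (calD r s a) = s + r" "dim_col (calD r s a) = s + r"
  by (simp_all add: calD_def)

lemma dim_calE [simp]: "dim_row (calE r s a) = s + r" "dim_col (calE r s a) = s + r"
  by (simp_all add: calE_def)

lemma Qmat_factor:
  assumes "n > r + s"
  shows "Qmat r s a n = calD r s a * sel_mat (s + r) n (Q_index r s n)"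
proof (rule eq_matI)
  fix p i assume "p < dim_row (calD r s a * sel_mat (s + r) n (Q_index r s n) :: complex mat)"
    "i < dim_col (calD r s a * sel_mat (s + r) n (Q_index r s n) :: complex mat)"
  then have p: "p < s + r" and i: "i < n" by auto
  have entry: "(calD r s a * sel_mat (s + r) n (Q_index r s n)) $$ (p,i)
      = (\<Sum>x<s + r. if i = Q_index r s n x then calD r s a $$ (p,x) else 0)"
    using p i by (intro index_mult_sel_mat) simp_all
  consider "i < s" | "n - r \<le> i" | "s \<le> i" "i < n - r" using assms by linarith
  then show "Qmat r s a n $$ (p,i) = (calD r s a * sel_mat (s + r) n (Q_index r s n)) $$ (p,i)"
  proof cases
    case 1
    have sum_eq: "(\<Sum>x<s + r. if i = Q_index r s n x then calD r s a $$ (p,x) else 0) = calD r s a $$ (p,i)"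
      using 1 assms by (intro sum_if_unique) (auto simp: Q_index_def)
    show ?thesis unfolding entry sum_eq using 1 p i assms by (auto simp: Qmat_def calD_def index_mat_four_block)
  next
    case 2
    have sum_eq: "(\<Sum>x<s + r. if i = Q_index r s n x then calD r s a $$ (p,x) else 0)
        = calD r s a $$ (p, s + (i - (n - r)))"
      using 2 assms i by (intro sum_if_unique) (auto simp: Q_index_def)
    show ?thesis unfolding entry sum_eq using 2 p i assms by (auto simp: Qmat_def calD_def index_mat_four_block)
  next
    case 3
    have sum_eq: "(\<Sum>x<s + r. if i = Q_index r s n x then calD r s a $$ (p,x) else 0) = 0"
      using 3 by (intro sum.neutral) (auto simp: Q_index_def)
    show ?thesis unfolding entry sum_eq using 3 p i by (simp add: Qmat_def)
  qed
qed (simp_all add: Qmat_def)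

lemma Pmat_factor:
  assumes "n > r + s"
  shows "Pmat r s a n = transpose_mat (sel_mat (s + r) n (P_index r s n)) * calE r s a"
proof (rule eq_matI)
  fix i q assume "i < dim_row (transpose_mat (sel_mat (s + r) n (P_index r s n)) * calE r s a :: complex mat)"
    "q < dim_col (transpose_mat (sel_mat (s + r) n (P_index r s n)) * calE r s a :: complex mat)"
  then have i: "i < n" and q: "q < s + r" by auto
  have entry: "(transpose_mat (sel_mat (s + r) n (P_index r s n)) * calE r s a) $$ (i,q)
      = (\<Sum>x<s + r. if i = P_index r s n x then calE r s a $$ (x,q) else 0)"
    using q i by (intro index_transpose_sel_mat_mult) simp_all
  consider "i < r" | "n - s \<le> i" | "r \<le> i" "i < n - s" using assms by linarith
  then show "Pmat r s a n $$ (i,q) = (transpose_mat (sel_mat (s + r) n (P_index r s n)) * calE r s a) $$ (i,q)"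
  proof cases
    case 1
    have sum_eq: "(\<Sum>x<s + r. if i = P_index r s n x then calE r s a $$ (x,q) else 0) = calE r s a $$ (s + i, q)"
      using 1 assms by (intro sum_if_unique) (auto simp: P_index_def)
    show ?thesis unfolding entry sum_eq using 1 q i assms by (auto simp: Pmat_def calE_def index_mat_four_block)
  next
    case 2
    have sum_eq: "(\<Sum>x<s + r. if i = P_index r s n x then calE r s a $$ (x,q) else 0)
        = calE r s a $$ (i - (n - s), q)"
      using 2 assms i by (intro sum_if_unique) (auto simp: P_index_def)
    show ?thesis unfolding entry sum_eq using 2 q i assms by (auto simp: Pmat_def calE_def index_mat_four_block)
  next
    case 3
    have sum_eq: "(\<Sum>x<s + r. if i = P_index r s n x then calE r s a $$ (x,q) else 0) = 0"
      using 3 by (intro sum.neutral) (auto simp: P_index_def)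
    show ?thesis unfolding entry sum_eq using 3 q i by (simp add: Pmat_def)
  qed
qed (simp_all add: Pmat_def)

definition calH_core :: "nat \<Rightarrow> nat \<Rightarrow> (int \<Rightarrow> complex) \<Rightarrow> complex \<Rightarrow> complex mat" where
  "calH_core r s a z = mat (s + r) (s + r) (\<lambda>(p,q). (1 / (2 * pi * \<i>)) *
     contour_integral (circlepath 0 1)
       (\<lambda>w. (if p < s then w ^ s else w powi (- int r)) * w powi (int p - int q) / (w * (z - symb r s a w))))"

lemma dim_calH_core [simp]: "dim_row (calH_core r s a z) = s + r" "dim_col (calH_core r s a z) = s + r"
  by (simp_all add: calH_core_def)

lemma calH_eq_calH_core: "calH r s a z = calD r s a * calH_core r s a z * calE r s a"
  by (simp add: calH_def calH_core_def)

definition H_exponent :: "nat \<Rightarrow> nat \<Rightarrow> nat \<Rightarrow> nat \<Rightarrow> int" where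
  "H_exponent r s x y = (if x < s then int s else - int r) + int x - int y"

lemma abs_H_exponent_le: "x < s + r \<Longrightarrow> y < s + r \<Longrightarrow> \<bar>H_exponent r s x y\<bar> \<le> int (2 * (r + s))"
  unfolding H_exponent_def by auto

lemma index_calH_core:
  assumes "x < s + r" "y < s + r"
  shows "calH_core r s a z $$ (x,y) = (1 / (2 * of_real pi * \<i>)) *
    contour_integral (circlepath 0 1) (\<lambda>u. u powi H_exponent r s x y / (u * (z - symb r s a u)))"
proof -
  have "(if x < s then w ^ s else w powi (- int r)) * w powi (int x - int y)
      = w powi ((if x < s then int s else - int r) + (int x - int y))" if "w \<noteq> 0" for w :: complex
    using that by (simp add: power_int_add flip: power_int_of_nat)
  then have "(if x < s then w ^ s else w powi (- int r)) * w powi (int x - int y) = w powi H_exponent r s x y"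
    if "w \<noteq> 0" for w :: complex
    using that by (simp add: H_exponent_def add_diff_eq)
  then have "(\<lambda>w. (if x < s then w ^ s else w powi (- int r)) * w powi (int x - int y) / (w * (z - symb r s a w)))
      = (\<lambda>u. u powi H_exponent r s x y / (u * (z - symb r s a u)))"
    by (intro ext) (case_tac "w = 0", auto)
  then show ?thesis using assms by (simp add: calH_core_def)
qed

lemma Q_index_diff_P_index_mod:
  assumes "n > r + s" "x < s + r" "y < s + r"
  shows "(int (Q_index r s n x) - int (P_index r s n y)) mod int n = H_exponent r s x y mod int n"
proof -
  have "int (Q_index r s n x) - int (P_index r s n y)
      = H_exponent r s x y + (if x < s then 0 else 1) * int n - (if y < s then 1 else 0) * int n"
    using assms by (simp add: Q_index_def P_index_def H_exponent_def of_nat_diff)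
  then show ?thesis by (simp add: mod_simps)
qed

definition trapezoid_error_mat :: "nat \<Rightarrow> nat \<Rightarrow> (int \<Rightarrow> complex) \<Rightarrow> nat \<Rightarrow> complex \<Rightarrow> complex mat" where
  "trapezoid_error_mat r s a n z = sel_mat (s + r) n (Q_index r s n) * resolv_dft r s a n z
     * transpose_mat (sel_mat (s + r) n (P_index r s n)) - calH_core r s a z"

lemma dim_trapezoid_error_mat [simp]:
  "dim_row (trapezoid_error_mat r s a n z) = s + r" "dim_col (trapezoid_error_mat r s a n z) = s + r"
  by (simp_all add: trapezoid_error_mat_def)

lemma index_trapezoid_error_mat:
  assumes n: "n > r + s" and x: "x < s + r" and y: "y < s + r"
  shows "trapezoid_error_mat r s a n z $$ (x,y)
    = trapezoid_error n (\<lambda>u. u powi H_exponent r s x y / (z - symb r s a u))"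
proof -
  have n1: "n \<ge> 1" using n by simp
  have Q: "Q_index r s n x < n" and P: "P_index r s n y < n"
    using n x y by (auto simp: Q_index_def P_index_def)
  have exponent: "(unit_root n ^ l) powi (int (Q_index r s n x) - int (P_index r s n y))
      = (unit_root n ^ l) powi H_exponent r s x y" for l
    using power_int_mod[OF unit_root_power_order[OF n1], of l] Q_index_diff_P_index_mod[OF n x y] by metis
  have "(sel_mat (s + r) n (Q_index r s n) * resolv_dft r s a n z * transpose_mat (sel_mat (s + r) n (P_index r s n))) $$ (x,y)
      = (sel_mat (s + r) n (Q_index r s n) * resolv_dft r s a n z) $$ (x, P_index r s n y)"
    using x y P by (intro index_mult_transpose_sel_mat) simp_all
  also have "\<dots> = resolv_dft r s a n z $$ (Q_index r s n x, P_index r s n y)"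
    using x Q P by (intro index_sel_mat_mult) simp_all
  also have "\<dots> = (1 / of_nat n) * (\<Sum>l<n. (unit_root n ^ l) powi H_exponent r s x y / (z - symb r s a (unit_root n ^ l)))"
    using Q P exponent by (simp add: resolv_dft_def)
  finally have "(sel_mat (s + r) n (Q_index r s n) * resolv_dft r s a n z
      * transpose_mat (sel_mat (s + r) n (P_index r s n))) $$ (x,y)
      = (1 / of_nat n) * (\<Sum>l<n. (unit_root n ^ l) powi H_exponent r s x y / (z - symb r s a (unit_root n ^ l)))" .
  moreover have "(\<lambda>u. u powi H_exponent r s x y / (z - symb r s a u) / u)
      = (\<lambda>u. u powi H_exponent r s x y / (u * (z - symb r s a u)))"
    by (simp add: mult.commute)
  ultimately show ?thesis
    using x y by (simp add: trapezoid_error_mat_def trapezoid_error_def index_calH_core)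
qed

lemma QRP_minus_calH_eq:
  assumes n: "n > r + s" and z: "z \<notin> symb r s a ` sphere 0 1"
  shows "Qmat r s a n * resolv r s a n z * Pmat r s a n - calH r s a z
     = calD r s a * (trapezoid_error_mat r s a n z * calE r s a)"
proof -
  let ?D = "calD r s a" and ?E = "calE r s a" and ?B = "resolv_dft r s a n z"
    and ?S = "sel_mat (s + r) n (Q_index r s n) :: complex mat"
    and ?T = "transpose_mat (sel_mat (s + r) n (P_index r s n)) :: complex mat" and ?H = "calH_core r s a z"
  have D: "?D \<in> carrier_mat (s + r) (s + r)" and E: "?E \<in> carrier_mat (s + r) (s + r)"
    and B: "?B \<in> carrier_mat n n" and S: "?S \<in> carrier_mat (s + r) n" and T: "?T \<in> carrier_mat n (s + r)"
    and H: "?H \<in> carrier_mat (s + r) (s + r)"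
    by (auto intro: carrier_matI)
  have SB: "?S * ?B \<in> carrier_mat (s + r) n" and SBT: "?S * ?B * ?T \<in> carrier_mat (s + r) (s + r)"
    using S B T by auto
  have "Qmat r s a n * resolv r s a n z * Pmat r s a n = ?D * ?S * ?B * (?T * ?E)"
    unfolding Qmat_factor[OF n] Pmat_factor[OF n] resolv_eq_resolv_dft[OF n z] ..
  also have "\<dots> = ?D * (?S * ?B * (?T * ?E))"
    using assoc_mult_mat[OF D S B] assoc_mult_mat[OF D SB mult_carrier_mat[OF T E]] by simp
  also have "?S * ?B * (?T * ?E) = ?S * ?B * ?T * ?E"
    using assoc_mult_mat[OF SB T E] by simp
  finally have "Qmat r s a n * resolv r s a n z * Pmat r s a n = ?D * (?S * ?B * ?T * ?E)" .
  moreover have "calH r s a z = ?D * (?H * ?E)"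
    unfolding calH_eq_calH_core using D H E by (simp add: assoc_mult_mat)
  ultimately show ?thesis
    using mult_minus_distrib_mat[OF D mult_carrier_mat[OF SBT E] mult_carrier_mat[OF H E]]
      minus_mult_distrib_mat[OF SBT H E] by (simp add: trapezoid_error_mat_def)
qed

section \<open>Uniform bounds on a compact set\<close>

lemma dist_sgn_complex: "w \<noteq> 0 \<Longrightarrow> dist w (sgn w) = \<bar>norm w - 1\<bar>" for w :: complex
proof -
  assume "w \<noteq> 0"
  then have "w - sgn w = of_real (1 - 1 / norm w) * w"
    by (simp add: sgn_div_norm scaleR_conv_of_real algebra_simps divide_inverse)
  then have "dist w (sgn w) = \<bar>1 - 1 / norm w\<bar> * norm w"
    by (simp only: dist_norm norm_mult norm_of_real)
  also have "\<dots> = \<bar>(1 - 1 / norm w) * norm w\<bar>"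
    by (simp add: abs_mult)
  also have "(1 - 1 / norm w) * norm w = norm w - 1"
    using \<open>w \<noteq> 0\<close> by (simp add: field_simps)
  finally show ?thesis .
qed

lemma uniformly_separated_near_unit_circle:
  fixes g :: "complex \<Rightarrow> complex"
  assumes cont: "continuous_on (- {0}) g" and "compact \<Gamma>" and disj: "\<Gamma> \<inter> g ` sphere 0 1 = {}"
  obtains \<eta> \<delta> where "0 < \<eta>" "\<eta> < 1" "0 < \<delta>"
    "\<And>z w. z \<in> \<Gamma> \<Longrightarrow> 1 - \<eta> < norm w \<Longrightarrow> norm w < 1 + \<eta> \<Longrightarrow> \<delta> \<le> norm (z - g w)"
proof -
  have "compact (g ` sphere 0 1)"
    using cont by (intro compact_continuous_image continuous_on_subset[OF cont]) auto
  then obtain d where d: "d > 0" and far: "\<And>z y. z \<in> \<Gamma> \<Longrightarrow> y \<in> g ` sphere 0 1 \<Longrightarrow> d \<le> dist z y"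
    using separate_compact_closed[OF \<open>compact \<Gamma>\<close> compact_imp_closed disj] by blast
  define A where "A = cball (0::complex) 2 - ball 0 (1/2)"
  have "compact A" unfolding A_def by (intro compact_diff) auto
  have "continuous_on A g" using cont by (rule continuous_on_subset) (auto simp: A_def)
  then have "uniformly_continuous_on A g" using \<open>compact A\<close> by (rule compact_uniformly_continuous)
  then obtain e where e: "e > 0" and close: "\<And>x x'. x \<in> A \<Longrightarrow> x' \<in> A \<Longrightarrow> dist x' x < e \<Longrightarrow> dist (g x') (g x) < d / 2"
    unfolding uniformly_continuous_on_def using d by (metis half_gt_zero)
  define \<eta> where "\<eta> = min e (1/2)"
  have "d / 2 \<le> norm (z - g w)" if z: "z \<in> \<Gamma>" and w: "1 - \<eta> < norm w" "norm w < 1 + \<eta>" for z w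
  proof -
    have w0: "w \<noteq> 0" using w by (auto simp: \<eta>_def)
    have "w \<in> A" "sgn w \<in> A" using w w0 by (auto simp: A_def \<eta>_def norm_sgn)
    moreover have "dist w (sgn w) < e" using w w0 by (auto simp: dist_sgn_complex \<eta>_def)
    ultimately have "dist (g w) (g (sgn w)) < d / 2" using close by blast
    moreover have "d \<le> dist z (g (sgn w))" using far[OF z] w0 by (simp add: norm_sgn)
    ultimately show ?thesis
      using dist_triangle[of z "g (sgn w)" "g w"] by (simp add: dist_commute dist_norm)
  qed
  then show ?thesis using that[of \<eta> "d / 2"] d e by (simp add: \<eta>_def)
qed

lemma power_int_le_power_of_abs_le:
  fixes R :: real
  assumes "1 \<le> R" "\<bar>d\<bar> \<le> int D" "x = R \<or> x = 1 / R"
  shows "x powi d \<le> R ^ D"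
proof -
  have "R powi d \<le> R powi int D" "R powi (- d) \<le> R powi int D"
    by (intro power_int_increasing; use assms in auto)+
  moreover have "(1 / R) powi d = R powi (- d)"
    by (simp add: power_int_minus power_int_inverse divide_inverse)
  ultimately show ?thesis using assms(3) by auto
qed

lemma symb_holomorphic_on: "symb r s a holomorphic_on (- {0})"
  unfolding symb_def[abs_def] by (intro holomorphic_intros) auto

lemma norm_trapezoid_error_power_int_div_le:
  assumes hol: "g holomorphic_on annulus lo hi" and "0 \<le> lo" "lo < \<rho>" "\<rho> < 1" "1 / \<rho> < hi"
    and sep: "\<And>u. u \<in> annulus lo hi \<Longrightarrow> \<delta> \<le> norm (z - g u)" and "0 < \<delta>"
    and d: "\<bar>d\<bar> \<le> int D" and n: "n \<ge> 1"
  shows "norm (trapezoid_error n (\<lambda>u. u powi d / (z - g u))) \<le> 2 * ((1 / \<rho>) ^ D / \<delta>) / (1 - \<rho>) * \<rho> ^ n"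
proof -
  define M where "M = (1 / \<rho>) ^ D / \<delta>"
  have \<rho>: "0 < \<rho>" "\<rho> < 1" using assms by auto
  then have "1 < 1 / \<rho>" by simp
  then have "lo < 1 / \<rho>" "\<rho> < hi" using \<rho> assms by linarith+
  have "0 < M" using \<rho> \<open>0 < \<delta>\<close> by (simp add: M_def)
  have "z - g u \<noteq> 0" if "u \<in> annulus lo hi" for u
    using sep[OF that] \<open>0 < \<delta>\<close> by auto
  then have "(\<lambda>u. u powi d / (z - g u)) holomorphic_on annulus lo hi"
    using hol assms(2) by (intro holomorphic_intros) auto
  moreover have "norm (u powi d / (z - g u)) \<le> M" if u: "norm u = \<rho> \<or> norm u = 1 / \<rho>" for u
  proof -
    have "\<delta> \<le> norm (z - g u)"
      using u assms \<open>lo < 1 / \<rho>\<close> \<open>\<rho> < hi\<close> by (intro sep) auto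
    moreover have "norm u powi d \<le> (1 / \<rho>) ^ D"
      using u \<open>1 < 1 / \<rho>\<close> by (intro power_int_le_power_of_abs_le[OF _ d]) auto
    ultimately show ?thesis
      using \<open>0 < \<delta>\<close> \<rho> unfolding M_def norm_divide norm_power_int by (intro frac_le) auto
  qed
  ultimately have "norm (trapezoid_error n (\<lambda>u. u powi d / (z - g u))) \<le> 2 * M * \<rho> ^ n / (1 - \<rho> ^ n)"
    using assms by (intro norm_trapezoid_error_le[OF _ _ _ _ _ n]) auto
  also have "\<dots> \<le> 2 * M * \<rho> ^ n / (1 - \<rho>)"
  proof -
    have "\<rho> ^ n \<le> \<rho>" using power_decreasing[of 1 n \<rho>] \<rho> n by simp
    then show ?thesis using \<rho> \<open>0 < M\<close> by (intro divide_left_mono mult_pos_pos) auto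
  qed
  finally show ?thesis by (simp add: M_def)
qed

lemma trapezoid_error_symb_bound:
  assumes "compact \<Gamma>" "\<Gamma> \<inter> symb r s a ` sphere 0 1 = {}"
  obtains C \<kappa> where "0 < C" "0 < \<kappa>" "\<kappa> < 1" "\<And>z n d. z \<in> \<Gamma> \<Longrightarrow> n \<ge> 1 \<Longrightarrow> \<bar>d\<bar> \<le> int D \<Longrightarrow>
     norm (trapezoid_error n (\<lambda>u. u powi d / (z - symb r s a u))) \<le> C * \<kappa> ^ n"
proof -
  obtain \<eta> \<delta> where \<eta>: "0 < \<eta>" "\<eta> < 1" and "0 < \<delta>"
    and sep: "\<And>z w. z \<in> \<Gamma> \<Longrightarrow> 1 - \<eta> < norm w \<Longrightarrow> norm w < 1 + \<eta> \<Longrightarrow> \<delta> \<le> norm (z - symb r s a w)"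
    using uniformly_separated_near_unit_circle[OF holomorphic_on_imp_continuous_on[OF symb_holomorphic_on] assms]
    by blast
  define \<rho> where "\<rho> = 1 / (1 + \<eta> / 2)"
  have \<rho>: "0 < \<rho>" "\<rho> < 1" "1 / \<rho> < 1 + \<eta>" using \<eta> by (auto simp: \<rho>_def)
  have "1 - \<eta> < \<rho>"
    using \<eta> by (simp add: \<rho>_def field_simps add_pos_pos)
  have "symb r s a holomorphic_on annulus (1 - \<eta>) (1 + \<eta>)"
    using \<eta> by (intro holomorphic_on_subset[OF symb_holomorphic_on]) auto
  from norm_trapezoid_error_power_int_div_le[OF this _ \<open>1 - \<eta> < \<rho>\<close> \<rho>(2,3) _ \<open>0 < \<delta>\<close>] sep \<eta>
  show ?thesis
    using that[of "2 * ((1 / \<rho>) ^ D / \<delta>) / (1 - \<rho>)" \<rho>] \<rho> \<open>0 < \<delta>\<close> by auto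
qed

section \<open>Norm estimates\<close>

definition entry_l1 :: "complex mat \<Rightarrow> real" where
  "entry_l1 X = (\<Sum>i<dim_row X. \<Sum>j<dim_col X. cmod (X $$ (i,j)))"

lemma entry_l1_nonneg: "0 \<le> entry_l1 X"
  by (simp add: entry_l1_def sum_nonneg)

lemma opnorm_le_entry_l1: "opnorm X \<le> entry_l1 X"
  unfolding opnorm_def
proof (rule cSup_least)
  have "vnorm (0\<^sub>v (dim_col X)) \<le> 1" by (simp add: vnorm_def)
  then show "{vnorm (X *\<^sub>v v) |v. v \<in> carrier_vec (dim_col X) \<and> vnorm v \<le> 1} \<noteq> {}"
    using zero_carrier_vec by blast
  fix y assume "y \<in> {vnorm (X *\<^sub>v v) |v. v \<in> carrier_vec (dim_col X) \<and> vnorm v \<le> 1}"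
  then obtain v where v: "v \<in> carrier_vec (dim_col X)" "vnorm v \<le> 1" and y: "y = vnorm (X *\<^sub>v v)"
    by auto
  have "cmod (v $ j) \<le> 1" if "j < dim_col X" for j
  proof -
    have "(cmod (v $ j))\<^sup>2 \<le> (\<Sum>j<dim_col X. (cmod (v $ j))\<^sup>2)"
      using that by (intro member_le_sum) auto
    also have "\<dots> \<le> 1" using v by (simp add: vnorm_def)
    finally show ?thesis by (simp add: power_le_one_iff abs_le_square_iff[symmetric])
  qed
  then have row: "cmod ((X *\<^sub>v v) $ i) \<le> (\<Sum>j<dim_col X. cmod (X $$ (i,j)))" if "i < dim_row X" for i
  proof -
    have "cmod ((X *\<^sub>v v) $ i) \<le> (\<Sum>j<dim_col X. cmod (X $$ (i,j)) * cmod (v $ j))"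
      using that v by (auto simp: scalar_prod_def lessThan_atLeast0 norm_mult[symmetric] intro: norm_sum)
    also have "\<dots> \<le> (\<Sum>j<dim_col X. cmod (X $$ (i,j)))"
      using \<open>\<And>j. j < dim_col X \<Longrightarrow> cmod (v $ j) \<le> 1\<close> by (intro sum_mono) (simp add: mult_left_le)
    finally show ?thesis .
  qed
  have "y = L2_set (\<lambda>i. cmod ((X *\<^sub>v v) $ i)) {..<dim_row X}"
    using y by (simp add: vnorm_def L2_set_def)
  also have "\<dots> \<le> (\<Sum>i<dim_row X. cmod ((X *\<^sub>v v) $ i))"
    by (rule L2_set_le_sum) simp
  also have "\<dots> \<le> entry_l1 X"
    unfolding entry_l1_def using row by (intro sum_mono) simp
  finally show "y \<le> entry_l1 X" .
qed

lemma entry_l1_mult_le: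
  assumes "dim_col A = dim_row B"
  shows "entry_l1 (A * B) \<le> entry_l1 A * entry_l1 B"
proof -
  let ?a = "\<lambda>i k. cmod (A $$ (i,k))" and ?b = "\<lambda>k j. cmod (B $$ (k,j))"
  have "entry_l1 (A * B) \<le> (\<Sum>i<dim_row A. \<Sum>j<dim_col B. \<Sum>k<dim_col A. ?a i k * ?b k j)"
    unfolding entry_l1_def using assms
    by (auto simp: scalar_prod_def lessThan_atLeast0 norm_mult[symmetric] intro!: sum_mono norm_sum)
  also have "\<dots> = (\<Sum>i<dim_row A. \<Sum>k<dim_col A. ?a i k * (\<Sum>j<dim_col B. ?b k j))"
    by (simp add: sum_distrib_left sum.swap[of _ "{..<dim_col B}"])
  also have "\<dots> \<le> (\<Sum>i<dim_row A. \<Sum>k<dim_col A. ?a i k * entry_l1 B)"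
    unfolding entry_l1_def using assms
    by (intro sum_mono mult_left_mono member_le_sum[of _ "{..<dim_row B}" "\<lambda>k. \<Sum>j<dim_col B. ?b k j"])
      (auto intro: sum_nonneg)
  also have "\<dots> = entry_l1 A * entry_l1 B"
    by (simp add: entry_l1_def sum_distrib_right)
  finally show ?thesis .
qed

lemma entry_l1_le_of_entries_le:
  assumes "\<And>i j. i < dim_row X \<Longrightarrow> j < dim_col X \<Longrightarrow> cmod (X $$ (i,j)) \<le> \<epsilon>"
  shows "entry_l1 X \<le> of_nat (dim_row X * dim_col X) * \<epsilon>"
  unfolding entry_l1_def using sum_mono[of "{..<dim_row X}" "\<lambda>i. \<Sum>j<dim_col X. cmod (X $$ (i,j))"
      "\<lambda>i. of_nat (dim_col X) * \<epsilon>"] sum_mono[of "{..<dim_col X}" _ "\<lambda>_. \<epsilon>"] assms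
  by (simp add: mult_ac)

lemma opnorm_QRP_minus_calH_le:
  assumes n: "n > r + s" and z: "z \<notin> symb r s a ` sphere 0 1"
    and err: "\<And>x y. x < s + r \<Longrightarrow> y < s + r \<Longrightarrow>
      norm (trapezoid_error n (\<lambda>u. u powi H_exponent r s x y / (z - symb r s a u))) \<le> \<epsilon>"
  shows "opnorm (Qmat r s a n * resolv r s a n z * Pmat r s a n - calH r s a z)
    \<le> entry_l1 (calD r s a) * of_nat ((s + r) * (s + r)) * entry_l1 (calE r s a) * \<epsilon>"
proof -
  let ?W = "trapezoid_error_mat r s a n z"
  have "entry_l1 ?W \<le> of_nat ((s + r) * (s + r)) * \<epsilon>"
    using entry_l1_le_of_entries_le[of ?W \<epsilon>] err by (simp add: index_trapezoid_error_mat[OF n])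
  have "opnorm (Qmat r s a n * resolv r s a n z * Pmat r s a n - calH r s a z)
      \<le> entry_l1 (calD r s a * (?W * calE r s a))"
    unfolding QRP_minus_calH_eq[OF n z] by (rule opnorm_le_entry_l1)
  also have "\<dots> \<le> entry_l1 (calD r s a) * entry_l1 (?W * calE r s a)"
    by (rule entry_l1_mult_le) simp
  also have "\<dots> \<le> entry_l1 (calD r s a) * (entry_l1 ?W * entry_l1 (calE r s a))"
    by (intro mult_left_mono entry_l1_mult_le entry_l1_nonneg) simp
  also have "\<dots> \<le> entry_l1 (calD r s a) * (of_nat ((s + r) * (s + r)) * \<epsilon> * entry_l1 (calE r s a))"
    by (intro mult_left_mono mult_right_mono entry_l1_nonneg) fact
  finally show ?thesis by (simp add: mult_ac)
qed

theorem proposition5p3: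
  fixes r s :: nat and a :: "int \<Rightarrow> complex" and \<Gamma> :: "complex set"
  assumes "s \<ge> 1" and "a (int s) \<noteq> 0"
    and "compact \<Gamma>" and "\<Gamma> \<inter> symb r s a ` sphere 0 1 = {}"
  shows "\<exists>C \<kappa>. C > 0 \<and> 0 < \<kappa> \<and> \<kappa> < 1 \<and>
    (\<forall>z\<in>\<Gamma>. \<forall>n. n > r + s \<longrightarrow>
       opnorm (Qmat r s a n * resolv r s a n z * Pmat r s a n - calH r s a z) \<le> C * \<kappa> ^ n)"
proof -
  obtain C0 \<kappa> where "0 < C0" "0 < \<kappa>" "\<kappa> < 1" and err: "\<And>z n d. z \<in> \<Gamma> \<Longrightarrow> n \<ge> 1 \<Longrightarrow>
      \<bar>d\<bar> \<le> int (2 * (r + s)) \<Longrightarrow> norm (trapezoid_error n (\<lambda>u. u powi d / (z - symb r s a u))) \<le> C0 * \<kappa> ^ n"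
    using trapezoid_error_symb_bound[OF assms(3,4)] by blast
  define K where "K = entry_l1 (calD r s a) * of_nat ((s + r) * (s + r)) * entry_l1 (calE r s a)"
  have "0 \<le> K" by (simp add: K_def entry_l1_nonneg)
  have "opnorm (Qmat r s a n * resolv r s a n z * Pmat r s a n - calH r s a z) \<le> (K + 1) * C0 * \<kappa> ^ n"
    if z: "z \<in> \<Gamma>" and n: "n > r + s" for z n
  proof -
    have "z \<notin> symb r s a ` sphere 0 1" using z assms(4) by blast
    then have "opnorm (Qmat r s a n * resolv r s a n z * Pmat r s a n - calH r s a z) \<le> K * (C0 * \<kappa> ^ n)"
      unfolding K_def using n err[OF z] abs_H_exponent_le by (intro opnorm_QRP_minus_calH_le) auto
    also have "\<dots> \<le> (K + 1) * C0 * \<kappa> ^ n" using \<open>0 < C0\<close> \<open>0 < \<kappa>\<close> by (simp add: algebra_simps)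
    finally show ?thesis .
  qed
  moreover have "0 < (K + 1) * C0" using \<open>0 < C0\<close> \<open>0 \<le> K\<close> by simp
  ultimately show ?thesis using \<open>0 < \<kappa>\<close> \<open>\<kappa> < 1\<close> by blast
qed

end
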